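(* Let $\sigma$ be a completely erasing $k$-block substitution with $w_\epsilon\ne1^k$ that satisfies the optimality condition. Then $f_\sigma$ is Li-Yorke chaotic. That is, there exists an uncountable set $S\subset\mathbb I$ such that for all distinct $x,y\in S$, $$\liminf_{n\to\infty}|f_\sigma^n(x)-f_\sigma^n(y)|=0\quad\text{and}\quad\limsup_{n\to\infty}|f_\sigma^n(x)-f_\sigma^n(y)|>0.$$
   Context: Notation: $\mathbb I=[0,1]$. $\{0,1\}^*$ and $\{0,1\}^\omega$ denote finite and infinite binary words, and $\epsilon$ is the empty word. For a word $w$, set $0.w=\sum_iw_i2^{-i}$. For $x\in(0,1]$, $\widetilde x$ is the unique infinite binary expansion of $x$ not ending in $0^\infty$. Fix $k\ge2$. An erasing $k$-block substitution is a map $\sigma:\{0,1\}^k\to\{0,1\}^*$ with exactly one block $w_\epsilon$ such that $\sigma(w_\epsilon)=\epsilon$. $\sigma$ is alternating if there are $\sigma_1,\dots,\sigma_k:\{0,1\}\to\{0,1\}^*$ with $\sigma(b_1\cdots b_k)=\sigma_1(b_1)\cdots\sigma_k(b_k)$. It is then extended to all finite or infinite words by $\sigma(u)=\prod_j\sigma_{((j-1)\bmod k)+1}(u_j)$. $\sigma$ is completely erasing if it is erasing and alternating, and every $w\in\{0,1\}^*$ satisfies $\sigma^n(w)=\epsilon$ for some $n\in\mathbb N$. The map $f_\sigma:\mathbb I\to\mathbb I$ is defined by $f_\sigma(x)=0.\sigma(\widetilde x)$ if $x\in(0,1]$ and $\widetilde x\neq w_\epsilon^\infty$, and $f_\sigma(x)=0$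 otherwise. Optimality condition: every $w\in\{0,1\}^\omega$ can be written as $w=\prod_{i\ge1}\sigma(b_i)$ with blocks $b_i\in\{0,1\}^k$ satisfying $\sigma(b_i)\ne\epsilon$. *)

theory Defs
  imports Complex_Main "HOL-Library.Extended_Real" "HOL-Library.Liminf_Limsup" "HOL-Library.Countable_Set"
begin

text \<open>Binary letters are booleans (True = 1, False = 0).
An alternating k-block substitution is given by its letter maps
s 0, ..., s (k-1) (the paper's sigma_1, ..., sigma_k).\<close>

definition bit :: "bool \<Rightarrow> real" where
  "bit b = (if b then 1 else 0)"

definition fin_val :: "bool list \<Rightarrow> real" where
  "fin_val w = (\<Sum>i<length w. bit (w ! i) / 2 ^ (i + 1))"

definition inf_val :: "(nat \<Rightarrow> bool) \<Rightarrow> real" where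
  "inf_val w = (\<Sum>i. bit (w i) / 2 ^ (i + 1))"

definition sigma_fin :: "(nat \<Rightarrow> bool \<Rightarrow> bool list) \<Rightarrow> nat \<Rightarrow> bool list \<Rightarrow> bool list" where
  "sigma_fin s k u = concat (map (\<lambda>j. s (j mod k) (u ! j)) [0..<length u])"

definition erasing :: "(nat \<Rightarrow> bool \<Rightarrow> bool list) \<Rightarrow> nat \<Rightarrow> bool" where
  "erasing s k \<longleftrightarrow> (\<exists>!b. length b = k \<and> sigma_fin s k b = [])"

definition w_eps :: "(nat \<Rightarrow> bool \<Rightarrow> bool list) \<Rightarrow> nat \<Rightarrow> bool list" where
  "w_eps s k = (THE b. length b = k \<and> sigma_fin s k b = [])"

text \<open>Completely erasing (alternating is built into the representation by letter maps).\<close>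
definition completely_erasing :: "(nat \<Rightarrow> bool \<Rightarrow> bool list) \<Rightarrow> nat \<Rightarrow> bool" where
  "completely_erasing s k \<longleftrightarrow> erasing s k \<and>
     (\<forall>w. \<exists>n. (sigma_fin s k ^^ n) w = [])"

definition pref_len :: "(nat \<Rightarrow> bool \<Rightarrow> bool list) \<Rightarrow> nat \<Rightarrow> (nat \<Rightarrow> bool) \<Rightarrow> nat \<Rightarrow> nat" where
  "pref_len s k u j = (\<Sum>m<j. length (s (m mod k) (u m)))"

text \<open>0.sigma(u) for an infinite word u, where sigma(u) is the (possibly finite)
  concatenation prod_j sigma_{(j mod k)+1}(u_j); written out as a series.\<close>
definition sigma_val :: "(nat \<Rightarrow> bool \<Rightarrow> bool list) \<Rightarrow> nat \<Rightarrow> (nat \<Rightarrow> bool) \<Rightarrow> real" where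
  "sigma_val s k u = (\<Sum>j. fin_val (s (j mod k) (u j)) / 2 ^ pref_len s k u j)"

definition tilde :: "real \<Rightarrow> (nat \<Rightarrow> bool)" where
  "tilde x = (THE w. (\<forall>N. \<exists>m\<ge>N. w m) \<and> inf_val w = x)"

definition f_sigma :: "(nat \<Rightarrow> bool \<Rightarrow> bool list) \<Rightarrow> nat \<Rightarrow> real \<Rightarrow> real" where
  "f_sigma s k x = (if 0 < x \<and> x \<le> 1 \<and> tilde x \<noteq> (\<lambda>i. w_eps s k ! (i mod k))
                    then sigma_val s k (tilde x) else 0)"

definition optimal :: "(nat \<Rightarrow> bool \<Rightarrow> bool list) \<Rightarrow> nat \<Rightarrow> bool" where
  "optimal s k \<longleftrightarrow> (\<forall>w :: nat \<Rightarrow> bool. \<exists>b :: nat \<Rightarrow> bool list.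
     (\<forall>i. length (b i) = k \<and> sigma_fin s k (b i) \<noteq> []) \<and>
     (\<forall>i j. j < length (sigma_fin s k (b i)) \<longrightarrow>
        w ((\<Sum>m<i. length (sigma_fin s k (b m))) + j) = sigma_fin s k (b i) ! j))"

end

theory Submission
  imports Defs "HOL-Library.Sublist"
begin

text \<open>
  Optimality lets every finite word be pulled back through \<open>\<sigma>\<close> at any phase, so any word
  \<open>D\<close> can be planted behind a word \<open>W\<close> in such a way that it appears right after
  \<open>\<sigma>\<^sup>N(W)\<close> at a prescribed time \<open>N\<close>.  Complete erasure provides times \<open>N\<close> at which
  \<open>\<sigma>\<^sup>N(W) = \<epsilon>\<close>, so that \<open>D\<close> is then the beginning of the orbit point.  For each
  \<open>t :: nat \<Rightarrow> bool\<close> we build, stage by stage, a point whose orbit shows at time \<open>N\<^sub>j\<close>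
  the word \<open>b b 1\<^sup>j\<^sup>+\<^sup>k\<close>, with \<open>b = 1\<close> at even stages and \<open>b = t m\<close> at the odd stages
  \<open>2\<langle>m, r\<rangle> + 1\<close>; the times \<open>N\<^sub>j\<close> are chosen uniformly over all histories.  Orbits
  of distinct points then agree on \<open>j\<close> leading digits at even stages and differ in the first
  two digits at infinitely many odd stages.  The block \<open>1\<^sup>k\<close> in every planted word keeps
  the orbit away from the exceptional expansion \<open>w\<^sub>\<epsilon>\<^sup>\<omega>\<close>, as \<open>w\<^sub>\<epsilon> \<noteq> 1\<^sup>k\<close>.
\<close>

section \<open>Binary expansions\<close>

lemma geometric_tail_sums: "(\<lambda>l. 1 / (2::real) ^ (l + n + 1)) sums (1 / 2 ^ n)"
proof -
  have "(\<lambda>l. 1 / 2 ^ (n + 1) * (1/2::real) ^ l) sums (1 / 2 ^ (n + 1) * (1 / (1 - 1/2)))"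
    by (intro sums_mult geometric_sums) simp
  then show ?thesis by (simp add: power_add power_divide mult_ac)
qed

lemma summable_binary_tail: "summable (\<lambda>l. bit (v (l + n)) / (2::real) ^ (l + n + 1))"
  by (rule summable_comparison_test'[OF sums_summable[OF geometric_tail_sums[of n]], of 0])
     (simp add: bit_def)

lemma summable_binary_digits: "summable (\<lambda>i. bit (v i) / (2::real) ^ (i + 1))"
  using summable_binary_tail[of v 0] by simp

lemma binary_tail_nonneg: "0 \<le> (\<Sum>l. bit (v (l + n)) / (2::real) ^ (l + n + 1))"
  by (rule suminf_nonneg[OF summable_binary_tail]) (simp add: bit_def)

lemma binary_tail_le: "(\<Sum>l. bit (v (l + n)) / (2::real) ^ (l + n + 1)) \<le> 1 / 2 ^ n"
proof -
  have "(\<Sum>l. bit (v (l + n)) / (2::real) ^ (l + n + 1)) \<le> (\<Sum>l. 1 / 2 ^ (l + n + 1))"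
    by (rule suminf_le[OF _ summable_binary_tail sums_summable[OF geometric_tail_sums]])
       (simp add: bit_def)
  also have "\<dots> = 1 / 2 ^ n"
    by (rule sums_unique[OF geometric_tail_sums, symmetric])
  finally show ?thesis .
qed

lemma binary_tail_pos: "v (l + n) \<Longrightarrow> 0 < (\<Sum>l. bit (v (l + n)) / (2::real) ^ (l + n + 1))"
  by (rule suminf_pos2[OF summable_binary_tail]) (auto simp: bit_def)

lemma inf_val_split:
  "inf_val v = (\<Sum>i<n. bit (v i) / 2 ^ (i + 1)) + (\<Sum>l. bit (v (l + n)) / 2 ^ (l + n + 1))"
  unfolding inf_val_def
  using suminf_split_initial_segment[OF summable_binary_digits, of v n] by simp

lemma inf_val_nonneg: "0 \<le> inf_val v"
  and inf_val_le_one: "inf_val v \<le> 1"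
  using binary_tail_nonneg[of v 0] binary_tail_le[of v 0] inf_val_split[of v 0] by auto

lemma inf_val_pos: "v i \<Longrightarrow> 0 < inf_val v"
  using binary_tail_pos[of v i 0] inf_val_split[of v 0] by auto

lemma inf_val_close:
  assumes "\<And>i. i < n \<Longrightarrow> v i = w i"
  shows "\<bar>inf_val v - inf_val w\<bar> \<le> 1 / 2 ^ n"
proof -
  have "(\<Sum>i<n. bit (v i) / (2::real) ^ (i + 1)) = (\<Sum>i<n. bit (w i) / 2 ^ (i + 1))"
    using assms by (intro sum.cong) auto
  then show ?thesis
    using inf_val_split[of v n] inf_val_split[of w n]
      binary_tail_nonneg[of v n] binary_tail_le[of v n]
      binary_tail_nonneg[of w n] binary_tail_le[of w n]
    by linarith
qed

lemma inf_val_ge_three_quarters: "v 0 \<Longrightarrow> v 1 \<Longrightarrow> 3/4 \<le> inf_val v"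
  using inf_val_split[of v 2] binary_tail_nonneg[of v 2] by (simp add: bit_def numeral_2_eq_2)

lemma inf_val_le_quarter: "\<not> v 0 \<Longrightarrow> \<not> v 1 \<Longrightarrow> inf_val v \<le> 1/4"
  using inf_val_split[of v 2] binary_tail_le[of v 2] by (simp add: bit_def numeral_2_eq_2)

lemma inf_val_less:
  assumes a: "\<forall>N. \<exists>m\<ge>N. a m" and agree: "\<And>j. j < i \<Longrightarrow> a j = b j" and "a i" "\<not> b i"
  shows "inf_val b < inf_val a"
proof -
  obtain m where "Suc i \<le> m" "a m" using a by blast
  then have "a ((m - Suc i) + Suc i)" by simp
  then have "0 < (\<Sum>l. bit (a (l + Suc i)) / (2::real) ^ (l + Suc i + 1))"
    by (rule binary_tail_pos)
  moreover have "(\<Sum>j<i. bit (a j) / (2::real) ^ (j + 1)) = (\<Sum>j<i. bit (b j) / 2 ^ (j + 1))"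
    using agree by (intro sum.cong) auto
  ultimately show ?thesis
    using inf_val_split[of a "Suc i"] inf_val_split[of b "Suc i"] binary_tail_le[of b "Suc i"]
      \<open>a i\<close> \<open>\<not> b i\<close> by (simp add: bit_def)
qed

lemma inf_val_inj:
  assumes v: "\<forall>N. \<exists>m\<ge>N. v m" and w: "\<forall>N. \<exists>m\<ge>N. w m" and eq: "inf_val v = inf_val w"
  shows "v = w"
proof (rule ccontr)
  assume "v \<noteq> w"
  then have "\<exists>j. v j \<noteq> w j" by auto
  define i where "i = (LEAST j. v j \<noteq> w j)"
  have "v i \<noteq> w i" unfolding i_def by (rule LeastI_ex) fact
  moreover have "\<And>j. j < i \<Longrightarrow> v j = w j" unfolding i_def using not_less_Least by blast
  ultimately show False
    using inf_val_less[OF v, of i w] inf_val_less[OF w, of i v] eq by (cases "v i") auto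
qed

lemma tilde_inf_val: "\<forall>N. \<exists>m\<ge>N. v m \<Longrightarrow> tilde (inf_val v) = v"
  unfolding tilde_def by (rule the_equality) (auto dest: inf_val_inj)

lemma fin_val_snoc: "fin_val (a @ [x]) = fin_val a + bit x / 2 ^ (length a + 1)"
  unfolding fin_val_def by (simp add: nth_append)

lemma fin_val_append: "fin_val (a @ b) = fin_val a + fin_val b / 2 ^ length a"
proof (induction b rule: rev_induct)
  case (snoc x xs)
  have "fin_val (a @ xs @ [x]) = fin_val (a @ xs) + bit x / (2 ^ length a * 2 ^ length xs * 2)"
    and "fin_val (xs @ [x]) = fin_val xs + bit x / (2 ^ length xs * 2)"
    using fin_val_snoc[of "a @ xs" x] fin_val_snoc[of xs x] by (simp_all add: power_add mult_ac)
  with snoc.IH show ?case by (simp add: add_divide_distrib divide_divide_eq_left mult_ac)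
qed (simp add: fin_val_def)

lemma fin_val_map_upt: "fin_val (map v [0..<n]) = (\<Sum>i<n. bit (v i) / 2 ^ (i + 1))"
  unfolding fin_val_def by simp

lemma fin_val_nonneg: "0 \<le> fin_val w"
  unfolding fin_val_def by (intro sum_nonneg) (simp add: bit_def)

lemma fin_val_le_one: "fin_val w \<le> 1"
proof -
  have "fin_val w \<le> 1 - 1 / 2 ^ length w"
  proof (induction w rule: rev_induct)
    case (snoc x xs)
    have "bit x / 2 ^ (length xs + 1) \<le> 1 / (2::real) ^ (length xs + 1)"
      by (simp add: bit_def)
    moreover have "1 / (2::real) ^ length xs = 2 * (1 / 2 ^ (length xs + 1))"
      by simp
    ultimately show ?case using snoc.IH by (simp add: fin_val_snoc)
  qed (simp add: fin_val_def)
  moreover have "0 \<le> 1 / (2::real) ^ length w"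
    by simp
  ultimately show ?thesis
    by linarith
qed

lemma liminf_eq_0_if_subseq_tendsto_0:
  fixes f :: "nat \<Rightarrow> real" and r :: "nat \<Rightarrow> nat"
  assumes "\<And>n. 0 \<le> f n" and "strict_mono r" and "(f \<circ> r) \<longlonglongrightarrow> 0"
  shows "liminf (\<lambda>n. ereal (f n)) = 0"
proof (rule antisym)
  have "((\<lambda>n. ereal (f n)) \<circ> r) \<longlonglongrightarrow> ereal 0"
    using tendsto_ereal[OF assms(3)] by (simp add: o_def)
  then have "liminf ((\<lambda>n. ereal (f n)) \<circ> r) = 0"
    by (simp add: lim_imp_Liminf zero_ereal_def)
  then show "liminf (\<lambda>n. ereal (f n)) \<le> 0"
    using liminf_subseq_mono[OF assms(2)] by metis
  show "0 \<le> liminf (\<lambda>n. ereal (f n))"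
    by (rule Liminf_bounded) (simp add: assms(1))
qed

lemma limsup_pos_if_subseq_ge:
  fixes f :: "nat \<Rightarrow> real" and r :: "nat \<Rightarrow> nat"
  assumes "strict_mono r" and "0 < c" and "\<And>i. c \<le> f (r i)"
  shows "0 < limsup (\<lambda>n. ereal (f n))"
proof -
  have "ereal c \<le> limsup ((\<lambda>n. ereal (f n)) \<circ> r)"
    by (rule le_Limsup) (simp_all add: assms(3))
  also have "\<dots> \<le> limsup (\<lambda>n. ereal (f n))"
    by (rule limsup_subseq_mono[OF assms(1)])
  finally have "ereal c \<le> limsup (\<lambda>n. ereal (f n))" .
  with assms(2) show ?thesis
    by (metis ereal_less(2) less_le_trans)
qed

lemma uncountable_UNIV_nat_bool: "uncountable (UNIV :: (nat \<Rightarrow> bool) set)"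
proof
  assume "countable (UNIV :: (nat \<Rightarrow> bool) set)"
  then obtain g :: "nat \<Rightarrow> nat \<Rightarrow> bool" where "range g = UNIV"
    using uncountable_def by blast
  then obtain n where "(\<lambda>i. \<not> g i i) = g n"
    by (metis UNIV_I imageE)
  then have "g n n = (\<not> g n n)"
    by metis
  then show False
    by simp
qed

lemma prefix_nth: "prefix xs ys \<Longrightarrow> i < length xs \<Longrightarrow> ys ! i = xs ! i"
  by (auto simp: prefix_def nth_append)

section \<open>Alternating block substitutions\<close>

locale block_substitution =
  fixes s :: "nat \<Rightarrow> bool \<Rightarrow> bool list" and k :: nat
begin

text \<open>\<open>subst_at p u\<close> is the image of \<open>u\<close> when its first letter sits at position \<open>p\<close>
  of the word being substituted, i.e. uses the letter maps with phase \<open>p mod k\<close>.\<close>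

fun subst_at :: "nat \<Rightarrow> bool list \<Rightarrow> bool list" where
  "subst_at p [] = []"
| "subst_at p (x # xs) = s (p mod k) x @ subst_at (Suc p) xs"

abbreviation subst_pow :: "nat \<Rightarrow> bool list \<Rightarrow> bool list" where
  "subst_pow n \<equiv> subst_at 0 ^^ n"

lemma subst_at_append: "subst_at p (a @ b) = subst_at p a @ subst_at (p + length a) b"
  by (induction a arbitrary: p) auto

lemma subst_at_cong_mod: "p mod k = q mod k \<Longrightarrow> subst_at p u = subst_at q u"
proof (induction u arbitrary: p q)
  case (Cons x xs)
  then have "Suc p mod k = Suc q mod k" by (metis mod_Suc_eq)
  then have "subst_at (Suc p) xs = subst_at (Suc q) xs" by (rule Cons.IH)
  with Cons.prems show ?case by simp
qed simp

lemma sigma_fin_eq_subst_at: "sigma_fin s k u = subst_at 0 u"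
proof (induction u rule: rev_induct)
  case (snoc x xs)
  have "sigma_fin s k (xs @ [x]) = sigma_fin s k xs @ s (length xs mod k) x"
    unfolding sigma_fin_def by (auto simp: nth_append intro!: arg_cong[where f=concat] map_cong)
  with snoc show ?case by (simp add: subst_at_append)
qed (simp add: sigma_fin_def)

lemma subst_at_eq_Nil_iff:
  "subst_at p u = [] \<longleftrightarrow> (\<forall>j<length u. s ((p + j) mod k) (u ! j) = [])"
proof (induction u arbitrary: p)
  case (Cons x xs)
  show ?case using Cons[of "Suc p"] by (auto simp: All_less_Suc2)
qed simp

lemma subst_pow_Nil: "subst_pow n [] = []"
  by (induction n) simp_all

lemma prefix_subst_at: "prefix a b \<Longrightarrow> prefix (subst_at p a) (subst_at p b)"
  by (auto simp: prefix_def subst_at_append)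

lemma prefix_subst_pow: "prefix a b \<Longrightarrow> prefix (subst_pow n a) (subst_pow n b)"
  by (induction n) (simp_all add: prefix_subst_at)

lemma subst_at_map_upt:
  "length (subst_at 0 (map u [0..<n])) = pref_len s k u n"
  "fin_val (subst_at 0 (map u [0..<n])) = (\<Sum>j<n. fin_val (s (j mod k) (u j)) / 2 ^ pref_len s k u j)"
proof (induction n)
  case (Suc n)
  have "subst_at 0 (map u [0..<Suc n]) = subst_at 0 (map u [0..<n]) @ s (n mod k) (u n)"
    by (simp add: subst_at_append)
  then show "length (subst_at 0 (map u [0..<Suc n])) = pref_len s k u (Suc n)"
    and "fin_val (subst_at 0 (map u [0..<Suc n])) =
      (\<Sum>j<Suc n. fin_val (s (j mod k) (u j)) / 2 ^ pref_len s k u j)"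
    using Suc by (simp_all add: fin_val_append pref_len_def)
qed (simp_all add: pref_len_def fin_val_def)

text \<open>The partial sums of the series defining \<open>sigma_val\<close> are the values of the prefixes
  of \<open>v\<close> of length \<open>pref_len s k u n\<close>, which is unbounded.\<close>

lemma sigma_val_eq_inf_val:
  assumes image: "\<And>n. subst_at 0 (map u [0..<n]) = map v [0..<pref_len s k u n]"
    and unbounded: "\<And>N. \<exists>n. N \<le> pref_len s k u n"
  shows "sigma_val s k u = inf_val v"
proof -
  define a where "a j = fin_val (s (j mod k) (u j)) / 2 ^ pref_len s k u j" for j
  have partial: "(\<Sum>j<n. a j) = (\<Sum>i<pref_len s k u n. bit (v i) / 2 ^ (i + 1))" for n
    using subst_at_map_upt(2)[of u n] by (simp add: a_def image fin_val_map_upt)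
  have "summable a"
  proof (rule summableI_nonneg_bounded[where x=1])
    show "0 \<le> a n" for n by (simp add: a_def fin_val_nonneg)
    show "sum a {..<n} \<le> 1" for n
      using subst_at_map_upt(2)[of u n] fin_val_le_one[of "subst_at 0 (map u [0..<n])"]
      by (simp add: a_def)
  qed
  then have "(\<lambda>n. \<Sum>j<n. a j) \<longlonglongrightarrow> sigma_val s k u"
    unfolding sigma_val_def a_def by (rule summable_LIMSEQ)
  moreover have "(\<lambda>n. \<Sum>i<pref_len s k u n. bit (v i) / (2::real) ^ (i + 1)) \<longlonglongrightarrow> inf_val v"
  proof (rule filterlim_compose[of "\<lambda>N. \<Sum>i<N. bit (v i) / (2::real) ^ (i + 1)"])
    show "(\<lambda>N. \<Sum>i<N. bit (v i) / (2::real) ^ (i + 1)) \<longlonglongrightarrow> inf_val v"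
      unfolding inf_val_def by (rule summable_LIMSEQ[OF summable_binary_digits])
    have "mono (pref_len s k u)"
      unfolding pref_len_def by (intro monoI sum_mono2) auto
    show "filterlim (pref_len s k u) at_top sequentially"
      unfolding filterlim_at_top eventually_sequentially
    proof
      fix N
      obtain n where "N \<le> pref_len s k u n" using unbounded by blast
      then show "\<exists>n. \<forall>m\<ge>n. N \<le> pref_len s k u m"
        using \<open>mono (pref_len s k u)\<close> by (meson monoD order_trans)
    qed
  qed
  ultimately show ?thesis
    unfolding partial by (rule LIMSEQ_unique)
qed

end

section \<open>Preimages and erasure\<close>

locale chaotic_substitution = block_substitution +
  assumes k_pos: "0 < k"
    and erases_every_word: "completely_erasing s k"
    and w_eps_not_ones: "w_eps s k \<noteq> replicate k True"
    and optimal: "optimal s k"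
begin

lemma length_w_eps: "length (w_eps s k) = k"
  and subst_at_w_eps: "subst_at 0 (w_eps s k) = []"
proof -
  have "erasing s k" using erases_every_word by (simp add: completely_erasing_def)
  then have "length (w_eps s k) = k \<and> sigma_fin s k (w_eps s k) = []"
    unfolding w_eps_def erasing_def by (rule theI')
  then show "length (w_eps s k) = k" "subst_at 0 (w_eps s k) = []"
    by (simp_all add: sigma_fin_eq_subst_at)
qed

lemma subst_at_drop_w_eps: "subst_at p (drop (p mod k) (w_eps s k)) = []"
proof -
  have "s ((p + j) mod k) (w_eps s k ! (p mod k + j)) = []" if "p mod k + j < k" for j
  proof -
    have "(p + j) mod k = p mod k + j"
      using that by (metis mod_add_left_eq mod_less)
    then show ?thesis
      using length_w_eps subst_at_w_eps that by (auto simp: subst_at_eq_Nil_iff)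
  qed
  then show ?thesis
    using length_w_eps by (simp add: subst_at_eq_Nil_iff)
qed

lemma exists_preimage_at_0: "\<exists>B. prefix D (subst_at 0 B)"
proof -
  define w where "w i = (i < length D \<and> D ! i)" for i
  obtain b :: "nat \<Rightarrow> bool list"
    where blocks: "\<And>i. length (b i) = k" "\<And>i. subst_at 0 (b i) \<noteq> []"
      and spell: "\<And>i j. j < length (subst_at 0 (b i)) \<Longrightarrow>
        w ((\<Sum>m<i. length (subst_at 0 (b m))) + j) = subst_at 0 (b i) ! j"
    using optimal[unfolded optimal_def sigma_fin_eq_subst_at, THEN spec, of w] by blast
  \<comment> \<open>\<open>w\<close> is \<open>D 0\<^sup>\<omega>\<close>; its first \<open>length D\<close> factors already spell \<open>D\<close>.\<close>
  define B where "B n = concat (map b [0..<n])" for n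
  have length_B: "length (B n) = n * k" for n
    by (induction n) (simp_all add: B_def blocks)
  have image_B: "length (subst_at 0 (B n)) = (\<Sum>m<n. length (subst_at 0 (b m)))
      \<and> n \<le> length (subst_at 0 (B n)) \<and> (\<forall>i<length (subst_at 0 (B n)). subst_at 0 (B n) ! i = w i)"
    for n
  proof (induction n)
    case (Suc n)
    define L where "L = (\<Sum>m<n. length (subst_at 0 (b m)))"
    have "subst_at (n * k) (b n) = subst_at 0 (b n)"
      by (rule subst_at_cong_mod) simp
    then have split: "subst_at 0 (B (Suc n)) = subst_at 0 (B n) @ subst_at 0 (b n)"
      by (simp add: B_def subst_at_append length_B[unfolded B_def])
    have "subst_at 0 (b n) \<noteq> []" by (rule blocks)
    then have "Suc n \<le> L + length (subst_at 0 (b n))"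
      using Suc.IH by (cases "subst_at 0 (b n)") (simp_all add: L_def)
    moreover have "subst_at 0 (B (Suc n)) ! i = w i"
      if "i < L + length (subst_at 0 (b n))" for i
    proof (cases "i < L")
      case False
      then have "w i = subst_at 0 (b n) ! (i - L)"
        using spell[of "i - L" n] that by (simp add: L_def)
      then show ?thesis
        using False Suc.IH by (simp add: split nth_append L_def)
    qed (use Suc.IH in \<open>simp add: split nth_append L_def\<close>)
    ultimately show ?case
      using Suc.IH by (simp add: split L_def)
  qed (simp add: B_def)
  have "take (length D) (subst_at 0 (B (length D))) = D"
    using image_B[of "length D"] by (intro nth_equalityI) (auto simp: w_def)
  then have "prefix D (subst_at 0 (B (length D)))"
    by (metis take_is_prefix)
  then show ?thesis ..
qed

lemma exists_preimage: "\<exists>u. prefix D (subst_at p u) \<and> sublist (replicate k True) u"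
proof -
  obtain B where B: "prefix D (subst_at 0 B)"
    using exists_preimage_at_0 by blast
  define pad where "pad = drop (p mod k) (w_eps s k)"
  have "p = k * (p div k) + p mod k" and "p mod k < k"
    using k_pos by simp_all
  moreover have "length pad = k - p mod k"
    using length_w_eps by (simp add: pad_def)
  ultimately have "p + length pad = k * (p div k) + k"
    by linarith
  then have aligned: "(p + length pad) mod k = 0"
    by simp
  have "subst_at p (pad @ B) = subst_at (p + length pad) B"
    by (simp add: subst_at_append pad_def subst_at_drop_w_eps)
  also have "\<dots> = subst_at 0 B"
    using aligned by (intro subst_at_cong_mod) simp
  finally have "prefix D (subst_at p ((pad @ B) @ replicate k True))"
    using B by (simp only: subst_at_append prefix_prefix)
  then show ?thesis by blast
qed

lemma subst_pow_eventually_Nil: "\<exists>n. subst_pow n w = []"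
proof -
  have "sigma_fin s k = subst_at 0"
    using sigma_fin_eq_subst_at by blast
  then show ?thesis
    using erases_every_word by (simp add: completely_erasing_def)
qed

lemma subst_pow_Nil_mono:
  assumes "subst_pow n w = []" "n \<le> m"
  shows "subst_pow m w = []"
proof -
  have "subst_pow m w = subst_pow (m - n) (subst_pow n w)"
    using assms(2) by (metis funpow_add le_add_diff_inverse2 o_apply)
  then show ?thesis
    using assms(1) by (simp add: subst_pow_Nil)
qed

lemma uniform_erasure_time: "finite A \<Longrightarrow> \<exists>N>N0. \<forall>w\<in>A. subst_pow N w = []"
proof (induction A rule: finite_induct)
  case empty
  show ?case by blast
next
  case (insert w A)
  obtain N where N: "N0 < N" "\<forall>v\<in>A. subst_pow N v = []"
    using insert.IH by blast
  obtain n where "subst_pow n w = []"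
    using subst_pow_eventually_Nil by blast
  then show ?case
    using N by (intro exI[of _ "max n N"]) (auto intro: subst_pow_Nil_mono)
qed

lemma plant_word:
  assumes "sublist (replicate k True) D"
  shows "\<exists>U. (\<forall>m\<le>N. \<exists>V. sublist (replicate k True) V \<and>
                 prefix (subst_pow m W @ V) (subst_pow m (W @ U)))
           \<and> prefix (subst_pow N W @ D) (subst_pow N (W @ U))"
  using assms
proof (induction N arbitrary: D)
  case 0
  then show ?case by (intro exI[of _ D]) auto
next
  case (Suc N)
  obtain D' where D': "prefix D (subst_at (length (subst_pow N W)) D')"
      "sublist (replicate k True) D'"
    using exists_preimage by blast
  then obtain U where U: "\<forall>m\<le>N. \<exists>V. sublist (replicate k True) V \<and>
        prefix (subst_pow m W @ V) (subst_pow m (W @ U))"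
      "prefix (subst_pow N W @ D') (subst_pow N (W @ U))"
    using Suc.IH by blast
  from U(2) obtain X where "subst_pow N (W @ U) = subst_pow N W @ D' @ X"
    by (auto simp: prefix_def)
  then have "subst_pow (Suc N) (W @ U) =
      subst_pow (Suc N) W @ subst_at (length (subst_pow N W)) D' @
      subst_at (length (subst_pow N W) + length D') X"
    by (simp add: subst_at_append)
  then have planted: "prefix (subst_pow (Suc N) W @ D) (subst_pow (Suc N) (W @ U))"
    using D'(1) by (auto simp: prefix_def)
  show ?case
    using U(1) planted Suc.prems by (intro exI[of _ U]) (auto simp: le_Suc_eq)
qed

lemma w_eps_power_has_no_ones_block: "\<not> (\<forall>q<k. w_eps s k ! ((p + q) mod k))"
proof
  assume ones: "\<forall>q<k. w_eps s k ! ((p + q) mod k)"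
  have "w_eps s k ! i" if "i < k" for i
  proof -
    define q where "q = (i + k - p mod k) mod k"
    have "(p + q) mod k = (p mod k + (i + k - p mod k)) mod k"
      by (simp add: q_def mod_add_left_eq mod_add_right_eq)
    also have "p mod k + (i + k - p mod k) = i + k"
      using mod_less_divisor[OF k_pos, of p] by linarith
    also have "(i + k) mod k = i"
      using that by simp
    finally show ?thesis
      using ones k_pos by (metis q_def mod_less_divisor)
  qed
  then have "w_eps s k = replicate k True"
    using length_w_eps by (intro nth_equalityI) simp_all
  with w_eps_not_ones show False ..
qed

lemma f_sigma_inf_val:
  assumes infinite_ones: "\<forall>N. \<exists>m\<ge>N. v m" and block: "\<forall>q<k. v (p + q)"
  shows "f_sigma s k (inf_val v) = sigma_val s k v"
proof -
  have "0 < inf_val v"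
    using infinite_ones inf_val_pos by blast
  moreover have "v \<noteq> (\<lambda>i. w_eps s k ! (i mod k))"
    using block w_eps_power_has_no_ones_block[of p] by auto
  ultimately show ?thesis
    by (simp add: f_sigma_def inf_val_le_one tilde_inf_val[OF infinite_ones])
qed

section \<open>The scrambled set\<close>

definition planting_word :: "bool list \<Rightarrow> nat \<Rightarrow> bool list \<Rightarrow> bool list" where
  "planting_word W N D = (SOME U.
     (\<forall>m\<le>N. \<exists>V. sublist (replicate k True) V \<and> prefix (subst_pow m W @ V) (subst_pow m (W @ U)))
     \<and> prefix (subst_pow N W @ D) (subst_pow N (W @ U)))"

lemma planting_word:
  assumes "sublist (replicate k True) D"
  shows "\<forall>m\<le>N. \<exists>V. sublist (replicate k True) V \<and>
           prefix (subst_pow m W @ V) (subst_pow m (W @ planting_word W N D))"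
    and "prefix (subst_pow N W @ D) (subst_pow N (W @ planting_word W N D))"
  using someI_ex[OF plant_word[OF assms, of N W]] unfolding planting_word_def by blast+

definition erasure_time :: "(bool list \<Rightarrow> bool list) \<Rightarrow> nat \<Rightarrow> nat \<Rightarrow> nat" where
  "erasure_time W j N0 =
     (SOME N. N0 < N \<and> (\<forall>bs. length bs = j \<longrightarrow> subst_pow N (W bs) = []))"

lemma erasure_time:
  "N0 < erasure_time W j N0"
  "length bs = j \<Longrightarrow> subst_pow (erasure_time W j N0) (W bs) = []"
proof -
  have "finite {bs :: bool list. length bs = j}"
    using finite_lists_length_eq[of "UNIV :: bool set" j] by simp
  then obtain N where "N0 < N" "\<forall>w\<in>W ` {bs. length bs = j}. subst_pow N w = []"
    using uniform_erasure_time[of "W ` {bs. length bs = j}" N0] by blast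
  then have "\<exists>N. N0 < N \<and> (\<forall>bs. length bs = j \<longrightarrow> subst_pow N (W bs) = [])"
    by auto
  from someI_ex[OF this]
  show "N0 < erasure_time W j N0"
    and "length bs = j \<Longrightarrow> subst_pow (erasure_time W j N0) (W bs) = []"
    unfolding erasure_time_def by blast+
qed

definition planted :: "nat \<Rightarrow> bool \<Rightarrow> bool list" where
  "planted j b = b # b # replicate (j + k) True"

text \<open>\<open>stage (Suc j) = (W\<^sub>j\<^sub>+\<^sub>1, N\<^sub>j)\<close>: \<open>W\<^sub>j\<^sub>+\<^sub>1 (b # bs)\<close> extends the word \<open>W\<^sub>j bs\<close> built
  from the history \<open>bs\<close> (latest bit first) so that \<open>planted j b\<close> shows up at time \<open>N\<^sub>j\<close>,
  and \<open>N\<^sub>j\<close> erases \<open>W\<^sub>j bs\<close> for all \<open>2\<^sup>j\<close> histories at once, so that it does not depend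
  on the point.\<close>

fun stage :: "nat \<Rightarrow> (bool list \<Rightarrow> bool list) \<times> nat" where
  "stage 0 = (\<lambda>_. [], 0)"
| "stage (Suc j) =
     (let W = fst (stage j); N = erasure_time W j (snd (stage j))
      in (\<lambda>bs. case bs of [] \<Rightarrow> [] | b # bs' \<Rightarrow> W bs' @ planting_word (W bs') N (planted j b), N))"

definition stage_time :: "nat \<Rightarrow> nat" where
  "stage_time j = snd (stage (Suc j))"

lemma subst_pow_stage_time: "length bs = j \<Longrightarrow> subst_pow (stage_time j) (fst (stage j) bs) = []"
  unfolding stage_time_def by (simp add: Let_def erasure_time(2))

lemma stage_time_less_Suc: "stage_time j < stage_time (Suc j)"
  unfolding stage_time_def by (simp add: Let_def erasure_time(1))

lemma strict_mono_stage_time: "strict_mono stage_time"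
  unfolding strict_mono_Suc_iff using stage_time_less_Suc by blast

lemma less_stage_time: "j < stage_time j"
proof (induction j)
  case 0
  show ?case unfolding stage_time_def by (simp add: Let_def erasure_time(1))
next
  case (Suc j)
  then show ?case using stage_time_less_Suc[of j] by simp
qed

definition target_bit :: "(nat \<Rightarrow> bool) \<Rightarrow> nat \<Rightarrow> bool" where
  "target_bit t j = (if even j then True else t (fst (prod_decode (j div 2))))"

primrec history :: "(nat \<Rightarrow> bool) \<Rightarrow> nat \<Rightarrow> bool list" where
  "history t 0 = []"
| "history t (Suc j) = target_bit t j # history t j"

definition orbit_word :: "(nat \<Rightarrow> bool) \<Rightarrow> nat \<Rightarrow> bool list" where
  "orbit_word t j = fst (stage j) (history t j)"

lemma length_history: "length (history t j) = j"
  by (induction j) simp_all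

lemma orbit_word_Suc:
  "orbit_word t (Suc j) =
     orbit_word t j @ planting_word (orbit_word t j) (stage_time j) (planted j (target_bit t j))"
  by (simp add: orbit_word_def stage_time_def Let_def)

lemma subst_pow_stage_time_orbit_word: "subst_pow (stage_time j) (orbit_word t j) = []"
  unfolding orbit_word_def by (rule subst_pow_stage_time) (rule length_history)

lemma sublist_ones_planted: "sublist (replicate k True) (planted j b)"
  unfolding planted_def sublist_def
  by (rule exI[of _ "b # b # replicate j True"], rule exI[of _ "[]"]) (simp add: replicate_add)

lemma planted_at_stage_time:
  "prefix (planted j (target_bit t j)) (subst_pow (stage_time j) (orbit_word t (Suc j)))"
  using planting_word(2)[OF sublist_ones_planted, of "stage_time j" "orbit_word t j" j "target_bit t j"]
  by (simp add: orbit_word_Suc subst_pow_stage_time_orbit_word)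

lemma ones_block_before_stage_time:
  assumes "m \<le> stage_time j"
  shows "\<exists>V. sublist (replicate k True) V \<and>
           prefix (subst_pow m (orbit_word t j) @ V) (subst_pow m (orbit_word t (Suc j)))"
  using planting_word(1)[OF sublist_ones_planted] assms by (simp add: orbit_word_Suc)

lemma prefix_orbit_word: "j \<le> j' \<Longrightarrow> prefix (orbit_word t j) (orbit_word t j')"
proof (induction j' rule: dec_induct)
  case (step j')
  then show ?case by (simp add: orbit_word_Suc)
qed simp

lemma length_subst_pow_orbit_word_Suc:
  assumes "m \<le> j"
  shows "length (subst_pow m (orbit_word t j)) < length (subst_pow m (orbit_word t (Suc j)))"
proof -
  obtain V where "sublist (replicate k True) V"
      and V: "prefix (subst_pow m (orbit_word t j) @ V) (subst_pow m (orbit_word t (Suc j)))"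
    using ones_block_before_stage_time less_stage_time[of j] assms by (meson le_less_trans less_imp_le)
  then have "0 < length V"
    using k_pos by (auto simp: sublist_def)
  with prefix_length_le[OF V] show ?thesis
    unfolding length_append by linarith
qed

lemma length_subst_pow_orbit_word: "d \<le> length (subst_pow m (orbit_word t (m + d)))"
proof (induction d)
  case (Suc d)
  then show ?case
    using length_subst_pow_orbit_word_Suc[of m "m + d" t] by simp
qed simp

text \<open>The limit of the increasing words \<open>subst_pow m (orbit_word t j)\<close>; the stage
  \<open>m + Suc i\<close> is already longer than \<open>i\<close> (\<open>length_subst_pow_orbit_word\<close>).\<close>

definition limit_word :: "(nat \<Rightarrow> bool) \<Rightarrow> nat \<Rightarrow> nat \<Rightarrow> bool" where
  "limit_word t m i = subst_pow m (orbit_word t (m + Suc i)) ! i"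

lemma limit_word_nth:
  assumes "i < length (subst_pow m (orbit_word t j))"
  shows "limit_word t m i = subst_pow m (orbit_word t j) ! i"
proof -
  define J where "J = max j (m + Suc i)"
  have "prefix (subst_pow m (orbit_word t j')) (subst_pow m (orbit_word t J))" if "j' \<le> J" for j'
    using that by (intro prefix_subst_pow prefix_orbit_word)
  moreover have "i < length (subst_pow m (orbit_word t (m + Suc i)))"
    using length_subst_pow_orbit_word[of "Suc i" m t] by simp
  ultimately show ?thesis
    using assms unfolding limit_word_def
    by (metis J_def max.cobounded1 max.cobounded2 prefix_nth)
qed

lemma map_limit_word:
  assumes "prefix w (subst_pow m (orbit_word t j))"
  shows "map (limit_word t m) [0..<length w] = w"
proof (rule nth_equalityI)
  fix i assume "i < length (map (limit_word t m) [0..<length w])"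
  then have "i < length w" by simp
  then show "map (limit_word t m) [0..<length w] ! i = w ! i"
    using limit_word_nth[OF less_le_trans[OF _ prefix_length_le[OF assms]]] prefix_nth[OF assms]
    by simp
qed simp

lemma limit_word_ones_block:
  assumes "m \<le> j"
  shows "\<exists>p\<ge>length (subst_pow m (orbit_word t j)). \<forall>q<k. limit_word t m (p + q)"
proof -
  define A where "A = subst_pow m (orbit_word t j)"
  obtain V where "sublist (replicate k True) V"
      and V: "prefix (A @ V) (subst_pow m (orbit_word t (Suc j)))"
    using ones_block_before_stage_time[of m j t] less_stage_time[of j] assms by (auto simp: A_def)
  then obtain a b where X: "prefix (A @ a @ replicate k True @ b) (subst_pow m (orbit_word t (Suc j)))"
    by (auto simp: sublist_def)
  have "limit_word t m (length A + length a + q)" if "q < k" for q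
  proof -
    have i: "length A + length a + q < length (A @ a @ replicate k True @ b)"
      using that by simp
    have "limit_word t m (length A + length a + q) = (A @ a @ replicate k True @ b) ! (length A + length a + q)"
      using limit_word_nth[OF less_le_trans[OF i prefix_length_le[OF X]]] prefix_nth[OF X i] by simp
    then show ?thesis
      using that by (simp add: nth_append)
  qed
  then show ?thesis
    by (intro exI[of _ "length A + length a"]) (simp add: A_def)
qed

lemma limit_word_infinitely_many: "\<forall>N. \<exists>p\<ge>N. limit_word t m p"
proof
  fix N
  obtain p where p: "length (subst_pow m (orbit_word t (m + N))) \<le> p"
      "\<forall>q<k. limit_word t m (p + q)"
    using limit_word_ones_block[of m "m + N" t] by auto
  have "limit_word t m (p + 0)"
    using p(2) k_pos by blast
  then show "\<exists>p\<ge>N. limit_word t m p"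
    using p(1) length_subst_pow_orbit_word[of N m t] by (auto intro: le_trans)
qed

lemma limit_word_at_stage_time:
  assumes "i < length (planted j (target_bit t j))"
  shows "limit_word t (stage_time j) i = planted j (target_bit t j) ! i"
proof -
  have "map (limit_word t (stage_time j)) [0..<length (planted j (target_bit t j))] ! i =
      planted j (target_bit t j) ! i"
    by (simp only: map_limit_word[OF planted_at_stage_time])
  then show ?thesis
    using assms by simp
qed

lemma sigma_val_limit_word: "sigma_val s k (limit_word t m) = inf_val (limit_word t (Suc m))"
proof (rule sigma_val_eq_inf_val)
  fix n
  define A where "A = subst_pow m (orbit_word t (m + n))"
  have "prefix (take n A) A" by (rule take_is_prefix)
  then have u: "map (limit_word t m) [0..<n] = take n A"
    using map_limit_word[of "take n A"] length_subst_pow_orbit_word[of n m t] by (simp add: A_def)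
  have "prefix (subst_at 0 (take n A)) (subst_pow (Suc m) (orbit_word t (m + n)))"
    using prefix_subst_at[OF take_is_prefix] by (simp add: A_def)
  from map_limit_word[OF this] subst_at_map_upt(1)[of "limit_word t m" n]
  show "subst_at 0 (map (limit_word t m) [0..<n]) =
      map (limit_word t (Suc m)) [0..<pref_len s k (limit_word t m) n]"
    unfolding u by simp
next
  fix N
  define A where "A = subst_pow m (orbit_word t (Suc m + N))"
  have "map (limit_word t m) [0..<length A] = A"
    using map_limit_word[of A m t "Suc m + N"] by (simp add: A_def)
  then have "pref_len s k (limit_word t m) (length A) = length (subst_pow (Suc m) (orbit_word t (Suc m + N)))"
    using subst_at_map_upt(1)[of "limit_word t m" "length A"] by (simp add: A_def)
  then show "\<exists>n. N \<le> pref_len s k (limit_word t m) n"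
    using length_subst_pow_orbit_word[of N "Suc m" t] by (metis add_Suc)
qed

lemma orbit_limit_word: "(f_sigma s k ^^ n) (inf_val (limit_word t 0)) = inf_val (limit_word t n)"
proof (induction n)
  case (Suc n)
  obtain p where "\<forall>q<k. limit_word t n (p + q)"
    using limit_word_ones_block[of n n t] by auto
  with Suc.IH show ?case
    by (simp add: f_sigma_inf_val[OF limit_word_infinitely_many] sigma_val_limit_word)
qed simp

lemma orbits_close:
  assumes "target_bit t j = target_bit t' j"
  shows "\<bar>inf_val (limit_word t (stage_time j)) - inf_val (limit_word t' (stage_time j))\<bar> \<le> 1 / 2 ^ j"
proof (rule inf_val_close)
  fix i assume "i < j"
  then show "limit_word t (stage_time j) i = limit_word t' (stage_time j) i"
    using limit_word_at_stage_time[of i j t] limit_word_at_stage_time[of i j t'] assms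
    by (simp add: planted_def)
qed

lemma orbits_far:
  assumes "target_bit t j \<noteq> target_bit t' j"
  shows "1 / 2 \<le> \<bar>inf_val (limit_word t (stage_time j)) - inf_val (limit_word t' (stage_time j))\<bar>"
proof -
  define x where "x u = limit_word u (stage_time j)" for u
  have leading: "x u 0 = target_bit u j" "x u 1 = target_bit u j" for u
    using limit_word_at_stage_time[of 0 j u] limit_word_at_stage_time[of 1 j u]
    by (simp_all add: x_def planted_def)
  show ?thesis
  proof (cases "target_bit t j")
    case True
    then show ?thesis
      using leading assms inf_val_ge_three_quarters[of "x t"] inf_val_le_quarter[of "x t'"]
      by (simp add: x_def)
  next
    case False
    then show ?thesis
      using leading assms inf_val_ge_three_quarters[of "x t'"] inf_val_le_quarter[of "x t"]
      by (simp add: x_def)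
  qed
qed

lemma target_bit_even: "target_bit t (2 * i) = True"
  by (simp add: target_bit_def)

lemma target_bit_odd: "target_bit t (2 * prod_encode (m, r) + 1) = t m"
  by (simp add: target_bit_def)

lemma limit_word_distance_liminf_limsup:
  assumes "t \<noteq> t'"
  defines "d \<equiv> \<lambda>n. \<bar>inf_val (limit_word t n) - inf_val (limit_word t' n)\<bar>"
  shows "liminf (\<lambda>n. ereal (d n)) = 0" and "0 < limsup (\<lambda>n. ereal (d n))"
proof -
  have "strict_mono (\<lambda>i. stage_time (2 * i))"
    using strict_mono_stage_time by (simp add: strict_mono_def)
  moreover have "(\<lambda>i. d (stage_time (2 * i))) \<longlonglongrightarrow> 0"
  proof (rule real_tendsto_sandwich[of "\<lambda>_. 0" _ _ "\<lambda>i. (1/4) ^ i"])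
    show "\<forall>\<^sub>F i in sequentially. d (stage_time (2 * i)) \<le> (1/4) ^ i"
      using orbits_close[OF target_bit_even[THEN trans, OF target_bit_even[symmetric]]]
      by (simp add: d_def power_mult power_one_over)
  qed (simp_all add: d_def LIMSEQ_realpow_zero)
  ultimately show "liminf (\<lambda>n. ereal (d n)) = 0"
    by (intro liminf_eq_0_if_subseq_tendsto_0) (simp_all add: d_def o_def)
  obtain m where m: "t m \<noteq> t' m"
    using assms(1) by auto
  have "strict_mono (\<lambda>r. 2 * prod_encode (m, r) + 1)"
    unfolding strict_mono_Suc_iff by (simp add: prod_encode_def)
  then have "strict_mono (\<lambda>r. stage_time (2 * prod_encode (m, r) + 1))"
    using strict_mono_stage_time by (simp add: strict_mono_def)
  moreover have "1/2 \<le> d (stage_time (2 * prod_encode (m, r) + 1))" for r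
    unfolding d_def by (rule orbits_far) (metis target_bit_odd m)
  ultimately show "0 < limsup (\<lambda>n. ereal (d n))"
    by (intro limsup_pos_if_subseq_ge[of _ "1/2"]) simp_all
qed

theorem scrambled_set:
  "\<exists>S \<subseteq> {0..1::real}. uncountable S \<and>
    (\<forall>x\<in>S. \<forall>y\<in>S. x \<noteq> y \<longrightarrow>
       liminf (\<lambda>n. ereal \<bar>(f_sigma s k ^^ n) x - (f_sigma s k ^^ n) y\<bar>) = 0 \<and>
       limsup (\<lambda>n. ereal \<bar>(f_sigma s k ^^ n) x - (f_sigma s k ^^ n) y\<bar>) > 0)"
proof (intro exI conjI)
  define point where "point t = inf_val (limit_word t 0)" for t
  have orbit: "(f_sigma s k ^^ n) (point t) = inf_val (limit_word t n)" for n t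
    unfolding point_def by (rule orbit_limit_word)
  have "inj point"
  proof (rule injI, rule ccontr)
    fix t t' assume "point t = point t'" "t \<noteq> t'"
    then have "inf_val (limit_word t n) = inf_val (limit_word t' n)" for n
      using orbit by metis
    then show False
      using limit_word_distance_liminf_limsup(2)[OF \<open>t \<noteq> t'\<close>]
      by (simp add: Limsup_const zero_ereal_def[symmetric])
  qed
  show "range point \<subseteq> {0..1}"
    by (auto simp: point_def inf_val_nonneg inf_val_le_one)
  show "uncountable (range point)"
    using countable_image_inj_on[OF _ \<open>inj point\<close>] uncountable_UNIV_nat_bool by blast
  show "\<forall>x\<in>range point. \<forall>y\<in>range point. x \<noteq> y \<longrightarrow>
      liminf (\<lambda>n. ereal \<bar>(f_sigma s k ^^ n) x - (f_sigma s k ^^ n) y\<bar>) = 0 \<and>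
      limsup (\<lambda>n. ereal \<bar>(f_sigma s k ^^ n) x - (f_sigma s k ^^ n) y\<bar>) > 0"
  proof (intro ballI impI)
    fix x y assume "x \<in> range point" "y \<in> range point" "x \<noteq> y"
    then obtain t t' where "x = point t" "y = point t'" "t \<noteq> t'"
      by blast
    then show "liminf (\<lambda>n. ereal \<bar>(f_sigma s k ^^ n) x - (f_sigma s k ^^ n) y\<bar>) = 0 \<and>
        limsup (\<lambda>n. ereal \<bar>(f_sigma s k ^^ n) x - (f_sigma s k ^^ n) y\<bar>) > 0"
      using limit_word_distance_liminf_limsup[of t t'] by (simp add: orbit)
  qed
qed

end

theorem mainTheorem17:
  fixes s :: "nat \<Rightarrow> bool \<Rightarrow> bool list" and k :: nat
  assumes "k \<ge> 2"
    and "completely_erasing s k"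
    and "w_eps s k \<noteq> replicate k True"
    and "optimal s k"
  shows "\<exists>S \<subseteq> {0..1::real}. uncountable S \<and>
    (\<forall>x\<in>S. \<forall>y\<in>S. x \<noteq> y \<longrightarrow>
       liminf (\<lambda>n. ereal \<bar>(f_sigma s k ^^ n) x - (f_sigma s k ^^ n) y\<bar>) = 0 \<and>
       limsup (\<lambda>n. ereal \<bar>(f_sigma s k ^^ n) x - (f_sigma s k ^^ n) y\<bar>) > 0)"
proof -
  interpret chaotic_substitution s k
    using assms by unfold_locales simp_all
  show ?thesis by (rule scrambled_set)
qed

end
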